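(* Let $X\in\mathcal M_{\mathbf r}$, $U_1,\dots,U_d$ a minimal left-orthogonal TT decomposition of $X$, and $V\in\mathrm T_X\mathcal M_{\mathbf r}$ given by gauged cores $\delta V_1,\dots,\delta V_d$. Let $c_1,\dots,c_d$ be smooth core curves on $(-\epsilon,\epsilon)$ with $c_k(t)=U_k+t\,\delta V_k+O(t^2)$ ($k<d$), $c_d(t)=U_d+t\,\delta V_d$, such that for every $t$ the cores $c_1(t),\dots,c_d(t)$ form a minimal left-orthogonal TT decomposition of a tensor in $\mathcal M_{\mathbf r}$. Let $X_{\le k}(t),X_{\ge k}(t)$ denote the interface matrices built from $c_1(t),\dots,c_d(t)$. Then for all $k\in[d]$: (1) $\frac{d}{dt}X_{\le k}(t)\big|_{t=0}=V_{\le k}$; (2) $\frac{d}{dt}X_{\ge k}(t)\big|_{t=0}=V_{\ge k}$.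
   Context: Fix $d\ge2$, positive integers $n_1,\dots,n_d$, $\mathbf r=(r_1,\dots,r_{d-1})$, $r_0=r_d=1$; $\mathcal M_{\mathbf r}$ is the manifold of tensors of TT-rank $\mathbf r$ (TT-rank defined via ranks of the colexicographic flattenings $Z^{<\mu>}$). TT cores $U_k\in\mathbb R^{r_{k-1}\times n_k\times r_k}$ with slices $U_k(i)$ give $X(i_1,\dots,i_d)=U_1(i_1)\cdots U_d(i_d)$; minimal means the TT-rank equals $\mathbf r$; $U^L:=U^{<2>}\in\mathbb R^{r_{k-1}n_k\times r_k}$, $U^R:=U^{<1>}\in\mathbb R^{r_{k-1}\times n_kr_k}$; left-orthogonal means $(U_k^L)^\top U_k^L=I$ for $k<d$. Interface matrices: $X_{\le0}=1$, $X_{\le k}=(I_{n_k}\otimes X_{\le k-1})U_k^L$; $X_{\ge d+1}=1$, $X_{\ge k}^\top=U_k^R(X_{\ge k+1}^\top\otimes I_{n_k})$. Tangent vectors: $V=\sum_kU_1(i_1)\cdots U_{k-1}(i_{k-1})\delta V_k(i_k)U_{k+1}(i_{k+1})\cdots U_d(i_d)$ with $(\delta V_k^L)^\top U_k^L=0$ for $k<d$. Variational interface matrices: $V_{\le0}=0$, $V_{\le k}=(I_{n_k}\otimes V_{\le k-1})U_k^L+(I_{n_k}\otimes X_{\le k-1})\delta V_k^L$; $V_{\ge d+1}=0$, $V_{\ge k}^\top=U_k^R(V_{\ge k+1}^\top\otimes I_{n_k})+\delta V_k^R(X_{\ge k+1}^\top\otimes I_{n_k})$. *)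

theory Defs
  imports "Jordan_Normal_Form.DL_Rank" "HOL-Library.Landau_Symbols"
begin

(* Conventions: cores are indexed k = 1..d; a core is a function
   U a i b  (a < r (k-1), i < n k, b < r k).  Ranks r :: nat => nat with
   r 0 = r d = 1.  Mode sizes n :: nat => nat (n k for k = 1..d).
   Tensors are functions on index lists  [i_1,...,i_d]  (0-based indices). *)

type_synonym core = "nat \<Rightarrow> nat \<Rightarrow> nat \<Rightarrow> real"

definition kron :: "real mat \<Rightarrow> real mat \<Rightarrow> real mat" where
  "kron A B = mat (dim_row A * dim_row B) (dim_col A * dim_col B)
     (\<lambda>(i,j). A $$ (i div dim_row B, j div dim_col B) * B $$ (i mod dim_row B, j mod dim_col B))"

(* U^L = U^{<2>} : (r_{k-1} n_k) x r_k, row index a + i * r_{k-1} (colexicographic) *)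
definition coreL :: "(nat \<Rightarrow> nat) \<Rightarrow> (nat \<Rightarrow> nat) \<Rightarrow> nat \<Rightarrow> core \<Rightarrow> real mat" where
  "coreL r n k U = mat (r (k-1) * n k) (r k)
     (\<lambda>(row,b). U (row mod r (k-1)) (row div r (k-1)) b)"

(* U^R = U^{<1>} : r_{k-1} x (n_k r_k), column index i + b * n_k (colexicographic) *)
definition coreR :: "(nat \<Rightarrow> nat) \<Rightarrow> (nat \<Rightarrow> nat) \<Rightarrow> nat \<Rightarrow> core \<Rightarrow> real mat" where
  "coreR r n k U = mat (r (k-1)) (n k * r k)
     (\<lambda>(a,col). U a (col mod n k) (col div n k))"

definition slice :: "(nat \<Rightarrow> nat) \<Rightarrow> nat \<Rightarrow> core \<Rightarrow> nat \<Rightarrow> real mat" where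
  "slice r k U i = mat (r (k-1)) (r k) (\<lambda>(a,b). U a i b)"

definition tt_eval :: "(nat \<Rightarrow> nat) \<Rightarrow> nat \<Rightarrow> (nat \<Rightarrow> core) \<Rightarrow> nat list \<Rightarrow> real" where
  "tt_eval r d U xs =
     (foldl (\<lambda>M k. M * slice r k (U k) (xs ! (k-1))) (1\<^sub>m 1) [1..<d+1]) $$ (0,0)"

(* colexicographic decoding of a linear index (first index runs fastest) *)
fun colex_decode :: "nat list \<Rightarrow> nat \<Rightarrow> nat list" where
  "colex_decode [] \<rho> = []"
| "colex_decode (m # ms) \<rho> = (\<rho> mod m) # colex_decode ms (\<rho> div m)"

definition flattening :: "nat \<Rightarrow> (nat \<Rightarrow> nat) \<Rightarrow> (nat list \<Rightarrow> real) \<Rightarrow> nat \<Rightarrow> real mat" where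
  "flattening d n Z \<mu> = mat (\<Prod>k\<in>{1..\<mu>}. n k) (\<Prod>k\<in>{\<mu>+1..d}. n k)
     (\<lambda>(\<rho>,\<sigma>). Z (colex_decode (map n [1..<\<mu>+1]) \<rho> @ colex_decode (map n [\<mu>+1..<d+1]) \<sigma>))"

definition mat_rank :: "real mat \<Rightarrow> nat" where
  "mat_rank A = vec_space.rank (dim_row A) A"

definition has_tt_rank :: "nat \<Rightarrow> (nat \<Rightarrow> nat) \<Rightarrow> (nat \<Rightarrow> nat) \<Rightarrow> (nat list \<Rightarrow> real) \<Rightarrow> bool" where
  "has_tt_rank d n r Z \<longleftrightarrow> (\<forall>\<mu>\<in>{1..<d}. mat_rank (flattening d n Z \<mu>) = r \<mu>)"

definition valid_index :: "nat \<Rightarrow> (nat \<Rightarrow> nat) \<Rightarrow> nat list \<Rightarrow> bool" where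
  "valid_index d n xs \<longleftrightarrow> length xs = d \<and> (\<forall>j<d. xs ! j < n (j+1))"

definition left_orthogonal :: "nat \<Rightarrow> (nat \<Rightarrow> nat) \<Rightarrow> (nat \<Rightarrow> nat) \<Rightarrow> (nat \<Rightarrow> core) \<Rightarrow> bool" where
  "left_orthogonal d n r U \<longleftrightarrow>
     (\<forall>k\<in>{1..<d}. transpose_mat (coreL r n k (U k)) * coreL r n k (U k) = 1\<^sub>m (r k))"

definition min_lo_TT_decomp :: "nat \<Rightarrow> (nat \<Rightarrow> nat) \<Rightarrow> (nat \<Rightarrow> nat) \<Rightarrow> (nat \<Rightarrow> core) \<Rightarrow> (nat list \<Rightarrow> real) \<Rightarrow> bool" where
  "min_lo_TT_decomp d n r U X \<longleftrightarrow>
     (\<forall>xs. valid_index d n xs \<longrightarrow> X xs = tt_eval r d U xs)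
     \<and> has_tt_rank d n r X \<and> left_orthogonal d n r U"

definition gauged :: "nat \<Rightarrow> (nat \<Rightarrow> nat) \<Rightarrow> (nat \<Rightarrow> nat) \<Rightarrow> (nat \<Rightarrow> core) \<Rightarrow> (nat \<Rightarrow> core) \<Rightarrow> bool" where
  "gauged d n r U dV \<longleftrightarrow>
     (\<forall>k\<in>{1..<d}. transpose_mat (coreL r n k (dV k)) * coreL r n k (U k) = 0\<^sub>m (r k) (r k))"

fun Xle :: "(nat \<Rightarrow> nat) \<Rightarrow> (nat \<Rightarrow> nat) \<Rightarrow> (nat \<Rightarrow> core) \<Rightarrow> nat \<Rightarrow> real mat" where
  "Xle r n U 0 = 1\<^sub>m 1"
| "Xle r n U (Suc k) = kron (1\<^sub>m (n (Suc k))) (Xle r n U k) * coreL r n (Suc k) (U (Suc k))"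

(* XgeT_aux d .. m = X_{>= d+1-m}^T *)
fun XgeT_aux :: "nat \<Rightarrow> (nat \<Rightarrow> nat) \<Rightarrow> (nat \<Rightarrow> nat) \<Rightarrow> (nat \<Rightarrow> core) \<Rightarrow> nat \<Rightarrow> real mat" where
  "XgeT_aux d r n U 0 = 1\<^sub>m 1"
| "XgeT_aux d r n U (Suc m) = coreR r n (d - m) (U (d - m)) * kron (XgeT_aux d r n U m) (1\<^sub>m (n (d - m)))"

definition Xge :: "nat \<Rightarrow> (nat \<Rightarrow> nat) \<Rightarrow> (nat \<Rightarrow> nat) \<Rightarrow> (nat \<Rightarrow> core) \<Rightarrow> nat \<Rightarrow> real mat" where
  "Xge d r n U k = transpose_mat (XgeT_aux d r n U (d + 1 - k))"

fun Vle :: "(nat \<Rightarrow> nat) \<Rightarrow> (nat \<Rightarrow> nat) \<Rightarrow> (nat \<Rightarrow> core) \<Rightarrow> (nat \<Rightarrow> core) \<Rightarrow> nat \<Rightarrow> real mat" where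
  "Vle r n U dV 0 = 0\<^sub>m 1 1"
| "Vle r n U dV (Suc k) =
     kron (1\<^sub>m (n (Suc k))) (Vle r n U dV k) * coreL r n (Suc k) (U (Suc k))
     + kron (1\<^sub>m (n (Suc k))) (Xle r n U k) * coreL r n (Suc k) (dV (Suc k))"

fun VgeT_aux :: "nat \<Rightarrow> (nat \<Rightarrow> nat) \<Rightarrow> (nat \<Rightarrow> nat) \<Rightarrow> (nat \<Rightarrow> core) \<Rightarrow> (nat \<Rightarrow> core) \<Rightarrow> nat \<Rightarrow> real mat" where
  "VgeT_aux d r n U dV 0 = 0\<^sub>m 1 1"
| "VgeT_aux d r n U dV (Suc m) =
     coreR r n (d - m) (U (d - m)) * kron (VgeT_aux d r n U dV m) (1\<^sub>m (n (d - m)))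
     + coreR r n (d - m) (dV (d - m)) * kron (XgeT_aux d r n U m) (1\<^sub>m (n (d - m)))"

definition Vge :: "nat \<Rightarrow> (nat \<Rightarrow> nat) \<Rightarrow> (nat \<Rightarrow> nat) \<Rightarrow> (nat \<Rightarrow> core) \<Rightarrow> (nat \<Rightarrow> core) \<Rightarrow> nat \<Rightarrow> real mat" where
  "Vge d r n U dV k = transpose_mat (VgeT_aux d r n U dV (d + 1 - k))"

definition mat_has_derivative_at :: "(real \<Rightarrow> real mat) \<Rightarrow> real mat \<Rightarrow> real \<Rightarrow> bool" where
  "mat_has_derivative_at A D t0 \<longleftrightarrow>
     (\<forall>t. dim_row (A t) = dim_row D \<and> dim_col (A t) = dim_col D) \<and>
     (\<forall>i<dim_row D. \<forall>j<dim_col D. ((\<lambda>t. A t $$ (i,j)) has_real_derivative D $$ (i,j)) (at t0))"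

definition smooth_real_on :: "(real \<Rightarrow> real) \<Rightarrow> real set \<Rightarrow> bool" where
  "smooth_real_on f S \<longleftrightarrow>
     (\<exists>D :: nat \<Rightarrow> real \<Rightarrow> real. D 0 = f \<and>
        (\<forall>m. \<forall>t\<in>S. (D m has_real_derivative D (Suc m) t) (at t)))"

end

theory Submission
  imports Defs
begin

(* The interface matrices are built from the cores by the recursions defining Xle and XgeT_aux,
   and the recursions defining Vle and VgeT_aux are exactly what the product rule produces when
   these are differentiated.  So it suffices that every core curve passes through U_k at t = 0
   with velocity dV_k, which the O(t^2) expansion gives as soon as the curve is continuous at 0. *)

lemma has_real_derivative_of_bigo_power2:
  fixes f :: "real \<Rightarrow> real"
  assumes cont: "isCont f 0"
    and expansion: "(\<lambda>t. f t - u - t * v) \<in> O[at 0](\<lambda>t. t ^ 2)"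
  shows "f 0 = u" and "(f has_real_derivative v) (at 0)"
proof -
  define g where "g t = f t - u - t * v" for t
  have nonzero: "\<forall>\<^sub>F t in at (0::real). t \<noteq> 0"
    by (simp add: eventually_at_filter)
  have "(\<lambda>t::real. t ^ 2) \<in> o[at 0](\<lambda>t. t)"
  proof (rule smalloI_tendsto[OF _ nonzero])
    have "((\<lambda>t::real. t) \<longlongrightarrow> 0) (at 0)"
      by (rule tendsto_ident_at)
    moreover have "\<forall>\<^sub>F t in at (0::real). t = t ^ 2 / t"
      using nonzero by eventually_elim (simp add: power2_eq_square)
    ultimately show "((\<lambda>t::real. t ^ 2 / t) \<longlongrightarrow> 0) (at 0)"
      by (rule Lim_transform_eventually)
  qed
  with expansion have "g \<in> o[at 0](\<lambda>t. t)"
    unfolding g_def by (rule landau_o.big_small_trans)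
  hence quotient: "((\<lambda>t. g t / t) \<longlongrightarrow> 0) (at 0)"
    by (rule smalloD_tendsto)
  have "\<forall>\<^sub>F t in at 0. g t / t * t + u + t * v = f t"
    using nonzero by eventually_elim (simp add: g_def)
  moreover have "((\<lambda>t. g t / t * t + u + t * v) \<longlongrightarrow> 0 * 0 + u + 0 * v) (at 0)"
    by (intro tendsto_intros quotient)
  ultimately have "(f \<longlongrightarrow> u) (at 0)"
    by (simp add: tendsto_cong)
  with cont show f0: "f 0 = u"
    by (intro tendsto_unique[OF at_neq_bot]) (simp_all add: isCont_def)
  have "\<forall>\<^sub>F t in at 0. v + g t / t = (f t - f 0) / (t - 0)"
    using nonzero by eventually_elim (simp add: g_def f0 field_simps)
  moreover have "((\<lambda>t. v + g t / t) \<longlongrightarrow> v + 0) (at 0)"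
    by (intro tendsto_intros quotient)
  ultimately show "(f has_real_derivative v) (at 0)"
    by (simp add: has_field_derivative_iff tendsto_cong)
qed


lemma has_real_derivative_of_affine_near:
  fixes f :: "real \<Rightarrow> real"
  assumes "open S" and "0 \<in> S" and "\<forall>t\<in>S. f t = u + t * v"
  shows "f 0 = u \<and> (f has_real_derivative v) (at 0)"
proof
  show "f 0 = u"
    using assms(2,3) by simp
  have "((\<lambda>t. u + t * v) has_real_derivative v) (at 0)"
    by (auto intro!: derivative_eq_intros)
  thus "(f has_real_derivative v) (at 0)"
    by (rule has_field_derivative_transform_within_open[OF _ assms(1,2)]) (use assms(3) in simp)
qed

lemma smooth_real_on_isCont:
  assumes "smooth_real_on f S" and "t \<in> S"
  shows "isCont f t"
proof -
  obtain D where "D 0 = f" and "\<forall>m. \<forall>t\<in>S. (D m has_real_derivative D (Suc m) t) (at t)"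
    using assms(1) unfolding smooth_real_on_def by blast
  with assms(2) have "(f has_real_derivative D 1 t) (at t)"
    by force
  thus ?thesis
    by (rule DERIV_isCont)
qed

lemma mat_has_derivative_at_const:
  "mat_has_derivative_at (\<lambda>t. C) (0\<^sub>m (dim_row C) (dim_col C)) t0"
  unfolding mat_has_derivative_at_def by auto

lemma mat_has_derivative_at_transpose:
  assumes "mat_has_derivative_at A DA t0"
  shows "mat_has_derivative_at (\<lambda>t. transpose_mat (A t)) (transpose_mat DA) t0"
  using assms unfolding mat_has_derivative_at_def by auto

lemma mat_has_derivative_at_mult:
  assumes A: "mat_has_derivative_at A DA t0" and B: "mat_has_derivative_at B DB t0"
    and dims: "dim_col DA = dim_row DB"
  shows "mat_has_derivative_at (\<lambda>t. A t * B t) (DA * B t0 + A t0 * DB) t0"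
proof -
  have dim_A: "dim_row (A t) = dim_row DA" "dim_col (A t) = dim_col DA"
    and dim_B: "dim_row (B t) = dim_row DB" "dim_col (B t) = dim_col DB" for t
    using A B unfolding mat_has_derivative_at_def by auto
  show ?thesis
    unfolding mat_has_derivative_at_def
  proof (intro conjI allI impI)
    fix t
    show "dim_row (A t * B t) = dim_row (DA * B t0 + A t0 * DB)"
      and "dim_col (A t * B t) = dim_col (DA * B t0 + A t0 * DB)"
      using dim_A dim_B by auto
  next
    fix i j
    assume "i < dim_row (DA * B t0 + A t0 * DB)" and "j < dim_col (DA * B t0 + A t0 * DB)"
    hence i: "i < dim_row DA" and j: "j < dim_col DB"
      using dim_A by auto
    have entry: "(A t * B t) $$ (i, j) = (\<Sum>l<dim_row DB. A t $$ (i, l) * B t $$ (l, j))" for t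
      using i j dims dim_A dim_B by (simp add: scalar_prod_def atLeast0LessThan)
    have "((\<lambda>t. \<Sum>l<dim_row DB. A t $$ (i, l) * B t $$ (l, j)) has_real_derivative
           (\<Sum>l<dim_row DB. DA $$ (i, l) * B t0 $$ (l, j) + DB $$ (l, j) * A t0 $$ (i, l))) (at t0)"
      using A B i j dims unfolding mat_has_derivative_at_def
      by (intro DERIV_sum DERIV_mult) auto
    moreover have "(DA * B t0 + A t0 * DB) $$ (i, j)
        = (\<Sum>l<dim_row DB. DA $$ (i, l) * B t0 $$ (l, j) + DB $$ (l, j) * A t0 $$ (i, l))"
      using i j dims dim_A dim_B
      by (simp add: scalar_prod_def sum.distrib atLeast0LessThan mult.commute)
    ultimately show "((\<lambda>t. (A t * B t) $$ (i, j)) has_real_derivative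
                     (DA * B t0 + A t0 * DB) $$ (i, j)) (at t0)"
      by (simp only: entry)
  qed
qed

lemma mat_has_derivative_at_kron_left:
  assumes A: "mat_has_derivative_at A DA t0"
  shows "mat_has_derivative_at (\<lambda>t. kron C (A t)) (kron C DA) t0"
proof -
  have dim_A: "dim_row (A t) = dim_row DA" "dim_col (A t) = dim_col DA" for t
    using A unfolding mat_has_derivative_at_def by auto
  show ?thesis
    unfolding mat_has_derivative_at_def
  proof (intro conjI allI impI)
    fix t
    show "dim_row (kron C (A t)) = dim_row (kron C DA)"
      and "dim_col (kron C (A t)) = dim_col (kron C DA)"
      using dim_A by (auto simp: kron_def)
  next
    fix i j
    assume "i < dim_row (kron C DA)" and "j < dim_col (kron C DA)"
    hence i: "i < dim_row C * dim_row DA" and j: "j < dim_col C * dim_col DA"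
      by (auto simp: kron_def)
    hence "dim_row DA > 0" "dim_col DA > 0"
      by (auto intro: Nat.gr0I)
    hence "((\<lambda>t. C $$ (i div dim_row DA, j div dim_col DA)
                 * A t $$ (i mod dim_row DA, j mod dim_col DA)) has_real_derivative
            C $$ (i div dim_row DA, j div dim_col DA)
                 * DA $$ (i mod dim_row DA, j mod dim_col DA)) (at t0)"
      using A unfolding mat_has_derivative_at_def by (auto intro!: DERIV_cmult)
    thus "((\<lambda>t. kron C (A t) $$ (i, j)) has_real_derivative kron C DA $$ (i, j)) (at t0)"
      using i j dim_A by (simp add: kron_def)
  qed
qed

lemma mat_has_derivative_at_kron_right:
  assumes A: "mat_has_derivative_at A DA t0"
  shows "mat_has_derivative_at (\<lambda>t. kron (A t) C) (kron DA C) t0"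
proof -
  have dim_A: "dim_row (A t) = dim_row DA" "dim_col (A t) = dim_col DA" for t
    using A unfolding mat_has_derivative_at_def by auto
  show ?thesis
    unfolding mat_has_derivative_at_def
  proof (intro conjI allI impI)
    fix t
    show "dim_row (kron (A t) C) = dim_row (kron DA C)"
      and "dim_col (kron (A t) C) = dim_col (kron DA C)"
      using dim_A by (auto simp: kron_def)
  next
    fix i j
    assume "i < dim_row (kron DA C)" and "j < dim_col (kron DA C)"
    hence i: "i < dim_row DA * dim_row C" and j: "j < dim_col DA * dim_col C"
      by (auto simp: kron_def)
    hence "i div dim_row C < dim_row DA" "j div dim_col C < dim_col DA"
      by (auto intro: less_mult_imp_div_less)
    hence "((\<lambda>t. A t $$ (i div dim_row C, j div dim_col C)
                 * C $$ (i mod dim_row C, j mod dim_col C)) has_real_derivative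
            DA $$ (i div dim_row C, j div dim_col C)
                 * C $$ (i mod dim_row C, j mod dim_col C)) (at t0)"
      using A unfolding mat_has_derivative_at_def by (auto intro!: DERIV_cmult_right)
    thus "((\<lambda>t. kron (A t) C $$ (i, j)) has_real_derivative kron DA C $$ (i, j)) (at t0)"
      using i j dim_A by (simp add: kron_def)
  qed
qed

lemma coreL_cong:
  assumes "\<forall>a<r (k-1). \<forall>i<n k. \<forall>b<r k. U a i b = U' a i b"
  shows "coreL r n k U = coreL r n k U'"
proof (rule eq_matI)
  fix row b
  assume "row < dim_row (coreL r n k U')" and "b < dim_col (coreL r n k U')"
  hence "row < r (k-1) * n k" and b: "b < r k"
    by (auto simp: coreL_def)
  hence "r (k-1) > 0" and "row div r (k-1) < n k"
    by (auto intro: Nat.gr0I less_mult_imp_div_less simp: mult.commute)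
  hence "row mod r (k-1) < r (k-1)" and "row div r (k-1) < n k"
    by simp_all
  thus "coreL r n k U $$ (row, b) = coreL r n k U' $$ (row, b)"
    using assms b \<open>row < r (k-1) * n k\<close> by (simp add: coreL_def)
qed (auto simp: coreL_def)

lemma coreR_cong:
  assumes "\<forall>a<r (k-1). \<forall>i<n k. \<forall>b<r k. U a i b = U' a i b"
  shows "coreR r n k U = coreR r n k U'"
proof (rule eq_matI)
  fix a col
  assume "a < dim_row (coreR r n k U')" and "col < dim_col (coreR r n k U')"
  hence a: "a < r (k-1)" and "col < n k * r k"
    by (auto simp: coreR_def)
  hence "n k > 0" and "col div n k < r k"
    by (auto intro: Nat.gr0I less_mult_imp_div_less simp: mult.commute)
  hence "col mod n k < n k" and "col div n k < r k"
    by simp_all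
  thus "coreR r n k U $$ (a, col) = coreR r n k U' $$ (a, col)"
    using assms a \<open>col < n k * r k\<close> by (simp add: coreR_def)
qed (auto simp: coreR_def)

lemma mat_has_derivative_at_coreL:
  assumes "\<forall>a<r (k-1). \<forall>i<n k. \<forall>b<r k. ((\<lambda>t. C t a i b) has_real_derivative dU a i b) (at t0)"
  shows "mat_has_derivative_at (\<lambda>t. coreL r n k (C t)) (coreL r n k dU) t0"
  unfolding mat_has_derivative_at_def
proof (intro conjI allI impI)
  fix t
  show "dim_row (coreL r n k (C t)) = dim_row (coreL r n k dU)"
    and "dim_col (coreL r n k (C t)) = dim_col (coreL r n k dU)"
    by (auto simp: coreL_def)
next
  fix row b
  assume "row < dim_row (coreL r n k dU)" and "b < dim_col (coreL r n k dU)"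
  hence "row < r (k-1) * n k" and b: "b < r k"
    by (auto simp: coreL_def)
  hence "r (k-1) > 0" and "row div r (k-1) < n k"
    by (auto intro: Nat.gr0I less_mult_imp_div_less simp: mult.commute)
  hence "row mod r (k-1) < r (k-1)" and "row div r (k-1) < n k"
    by simp_all
  thus "((\<lambda>t. coreL r n k (C t) $$ (row, b)) has_real_derivative coreL r n k dU $$ (row, b)) (at t0)"
    using assms b \<open>row < r (k-1) * n k\<close> by (simp add: coreL_def)
qed

lemma mat_has_derivative_at_coreR:
  assumes "\<forall>a<r (k-1). \<forall>i<n k. \<forall>b<r k. ((\<lambda>t. C t a i b) has_real_derivative dU a i b) (at t0)"
  shows "mat_has_derivative_at (\<lambda>t. coreR r n k (C t)) (coreR r n k dU) t0"
  unfolding mat_has_derivative_at_def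
proof (intro conjI allI impI)
  fix t
  show "dim_row (coreR r n k (C t)) = dim_row (coreR r n k dU)"
    and "dim_col (coreR r n k (C t)) = dim_col (coreR r n k dU)"
    by (auto simp: coreR_def)
next
  fix a col
  assume "a < dim_row (coreR r n k dU)" and "col < dim_col (coreR r n k dU)"
  hence a: "a < r (k-1)" and "col < n k * r k"
    by (auto simp: coreR_def)
  hence "n k > 0" and "col div n k < r k"
    by (auto intro: Nat.gr0I less_mult_imp_div_less simp: mult.commute)
  hence "col mod n k < n k" and "col div n k < r k"
    by simp_all
  thus "((\<lambda>t. coreR r n k (C t) $$ (a, col)) has_real_derivative coreR r n k dU $$ (a, col)) (at t0)"
    using assms a \<open>col < n k * r k\<close> by (simp add: coreR_def)
qed

lemma Xle_cong:
  "(\<forall>j\<in>{1..k}. coreL r n j (U j) = coreL r n j (U' j)) \<Longrightarrow> Xle r n U k = Xle r n U' k"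
  by (induction k) auto

lemma XgeT_aux_cong:
  "(\<forall>m'<m. coreR r n (d - m') (U (d - m')) = coreR r n (d - m') (U' (d - m'))) \<Longrightarrow>
   XgeT_aux d r n U m = XgeT_aux d r n U' m"
  by (induction m) auto

lemma dim_col_Vle: "dim_col (Vle r n U dV k) = (if k = 0 then 1 else r k)"
  by (cases k) (auto simp: coreL_def)

lemma dim_col_VgeT_aux: "dim_col (VgeT_aux d r n U dV m) = dim_col (XgeT_aux d r n U m)"
  by (induction m) (simp_all add: kron_def)

lemma dim_row_VgeT_aux: "dim_row (VgeT_aux d r n U dV m) = (if m = 0 then 1 else r (d - m))"
  by (cases m) (auto simp: coreR_def)

definition core_tangent ::
    "(nat \<Rightarrow> nat) \<Rightarrow> (nat \<Rightarrow> nat) \<Rightarrow> nat \<Rightarrow> (real \<Rightarrow> nat \<Rightarrow> core) \<Rightarrow> (nat \<Rightarrow> core) \<Rightarrow> (nat \<Rightarrow> core)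
     \<Rightarrow> real \<Rightarrow> bool" where
  "core_tangent r n d C U dV t0 \<longleftrightarrow>
     (\<forall>k\<in>{1..d}. \<forall>a<r (k-1). \<forall>i<n k. \<forall>b<r k.
        C t0 k a i b = U k a i b \<and> ((\<lambda>t. C t k a i b) has_real_derivative dV k a i b) (at t0))"

lemma core_tangentD:
  assumes "core_tangent r n d C U dV t0" and "k \<in> {1..d}"
  shows "coreL r n k (C t0 k) = coreL r n k (U k)"
    and "coreR r n k (C t0 k) = coreR r n k (U k)"
    and "mat_has_derivative_at (\<lambda>t. coreL r n k (C t k)) (coreL r n k (dV k)) t0"
    and "mat_has_derivative_at (\<lambda>t. coreR r n k (C t k)) (coreR r n k (dV k)) t0"
  using assms unfolding core_tangent_def
  by (auto intro!: coreL_cong coreR_cong mat_has_derivative_at_coreL mat_has_derivative_at_coreR)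

lemma mat_has_derivative_at_Xle:
  assumes tangent: "core_tangent r n d C U dV t0" and r0: "r 0 = 1"
  shows "k \<le> d \<Longrightarrow> mat_has_derivative_at (\<lambda>t. Xle r n (C t) k) (Vle r n U dV k) t0"
proof (induction k)
  case 0
  show ?case
    using mat_has_derivative_at_const[of "1\<^sub>m 1"] by simp
next
  case (Suc k)
  have k: "Suc k \<in> {1..d}"
    using Suc.prems by simp
  have "Xle r n (C t0) k = Xle r n U k"
    using Suc.prems core_tangentD(1)[OF tangent] by (intro Xle_cong) auto
  moreover have "mat_has_derivative_at
      (\<lambda>t. kron (1\<^sub>m (n (Suc k))) (Xle r n (C t) k) * coreL r n (Suc k) (C t (Suc k)))
      (kron (1\<^sub>m (n (Suc k))) (Vle r n U dV k) * coreL r n (Suc k) (C t0 (Suc k))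
       + kron (1\<^sub>m (n (Suc k))) (Xle r n (C t0) k) * coreL r n (Suc k) (dV (Suc k))) t0"
    using Suc r0 core_tangentD(3)[OF tangent k]
    by (intro mat_has_derivative_at_mult mat_has_derivative_at_kron_left)
       (auto simp: kron_def coreL_def dim_col_Vle)
  ultimately show ?case
    using core_tangentD(1)[OF tangent k] by simp
qed

lemma mat_has_derivative_at_XgeT_aux:
  assumes tangent: "core_tangent r n d C U dV t0" and rd: "r d = 1"
  shows "m \<le> d \<Longrightarrow> mat_has_derivative_at (\<lambda>t. XgeT_aux d r n (C t) m) (VgeT_aux d r n U dV m) t0"
proof (induction m)
  case 0
  show ?case
    using mat_has_derivative_at_const[of "1\<^sub>m 1"] by simp
next
  case (Suc m)
  have k: "d - m \<in> {1..d}"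
    using Suc.prems by auto
  let ?R = "\<lambda>V. coreR r n (d - m) V" and ?I = "1\<^sub>m (n (d - m))"
  have "XgeT_aux d r n (C t0) m = XgeT_aux d r n U m"
    using Suc.prems core_tangentD(2)[OF tangent] by (intro XgeT_aux_cong) auto
  moreover have "mat_has_derivative_at (\<lambda>t. ?R (C t (d - m)) * kron (XgeT_aux d r n (C t) m) ?I)
      (?R (dV (d - m)) * kron (XgeT_aux d r n (C t0) m) ?I
       + ?R (C t0 (d - m)) * kron (VgeT_aux d r n U dV m) ?I) t0"
    using Suc rd core_tangentD(4)[OF tangent k]
    by (intro mat_has_derivative_at_mult mat_has_derivative_at_kron_right)
       (auto simp: kron_def coreR_def dim_row_VgeT_aux)
  moreover have "?R (dV (d - m)) * kron (XgeT_aux d r n U m) ?I + ?R (U (d - m)) * kron (VgeT_aux d r n U dV m) ?I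
      = ?R (U (d - m)) * kron (VgeT_aux d r n U dV m) ?I + ?R (dV (d - m)) * kron (XgeT_aux d r n U m) ?I"
    by (rule eq_matI) (auto simp: coreR_def kron_def dim_col_VgeT_aux)
  ultimately show ?case
    using core_tangentD(2)[OF tangent k] by simp
qed

lemma mat_has_derivative_at_Xge:
  assumes "core_tangent r n d C U dV t0" and "r d = 1" and "1 \<le> k"
  shows "mat_has_derivative_at (\<lambda>t. Xge d r n (C t) k) (Vge d r n U dV k) t0"
  unfolding Xge_def Vge_def
  using assms by (intro mat_has_derivative_at_transpose mat_has_derivative_at_XgeT_aux) auto

theorem lemma16:
  fixes d :: nat and n r :: "nat \<Rightarrow> nat"
    and X :: "nat list \<Rightarrow> real"
    and U dV :: "nat \<Rightarrow> core"
    and c :: "real \<Rightarrow> nat \<Rightarrow> core"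
    and \<epsilon> :: real
  assumes d2: "d \<ge> 2"
    and npos: "\<forall>k\<in>{1..d}. n k > 0"
    and rpos: "\<forall>k\<in>{1..<d}. r k > 0"
    and r0: "r 0 = 1" and rd: "r d = 1"
    and XU: "min_lo_TT_decomp d n r U X"
    and gauge: "gauged d n r U dV"
    and eps: "\<epsilon> > 0"
    and smooth: "\<forall>k\<in>{1..d}. \<forall>a<r (k-1). \<forall>i<n k. \<forall>b<r k.
                   smooth_real_on (\<lambda>t. c t k a i b) {-\<epsilon><..<\<epsilon>}"
    and expand: "\<forall>k\<in>{1..<d}. \<forall>a<r (k-1). \<forall>i<n k. \<forall>b<r k.
                   (\<lambda>t. c t k a i b - U k a i b - t * dV k a i b) \<in> O[at 0](\<lambda>t. t ^ 2)"
    and lastcore: "\<forall>t\<in>{-\<epsilon><..<\<epsilon>}. \<forall>a<r (d-1). \<forall>i<n d. \<forall>b<r d.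
                   c t d a i b = U d a i b + t * dV d a i b"
    and curve_TT: "\<forall>t\<in>{-\<epsilon><..<\<epsilon>}. \<exists>Y. min_lo_TT_decomp d n r (c t) Y"
  shows "\<forall>k\<in>{1..d}.
           mat_has_derivative_at (\<lambda>t. Xle r n (c t) k) (Vle r n U dV k) 0
         \<and> mat_has_derivative_at (\<lambda>t. Xge d r n (c t) k) (Vge d r n U dV k) 0"
proof -
  have zero: "0 \<in> {-\<epsilon><..<\<epsilon>}"
    using eps by simp
  have "core_tangent r n d c U dV 0"
    unfolding core_tangent_def
  proof (intro ballI allI impI)
    fix k a i b
    assume k: "k \<in> {1..d}" and idx: "a < r (k-1)" "i < n k" "b < r k"
    show "c 0 k a i b = U k a i b \<and> ((\<lambda>t. c t k a i b) has_real_derivative dV k a i b) (at 0)"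
    proof (cases "k = d")
      case True
      thus ?thesis
        using lastcore idx by (intro has_real_derivative_of_affine_near[OF _ zero]) auto
    next
      case False
      with k have "k \<in> {1..<d}"
        by simp
      moreover have "isCont (\<lambda>t. c t k a i b) 0"
        using smooth k idx zero by (blast intro: smooth_real_on_isCont)
      ultimately show ?thesis
        using has_real_derivative_of_bigo_power2 expand idx by blast
    qed
  qed
  thus ?thesis
    using r0 rd by (auto intro: mat_has_derivative_at_Xle mat_has_derivative_at_Xge)
qed

end
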